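(* Let $m_1\le m_2\le\dots\le m_k$ be nonnegative integers, $n=\sum_r m_r$, and $T_1,\dots,T_n\in\{H,L\}$ with $0\le H<L$. Let $(x_1,\dots,x_n)$ be the decision sequence output by Algorithm 1 on this input. If $i<j$ and $T_i=T_j$, then $x_i\le x_j$.
   Context: Algorithm 1 (simulation-based threshold algorithm). Input: integers $0\le m_1\le\dots\le m_k$ and a sequence $T_1,\dots,T_n$ with $n=\sum_r m_r$. Set $q^{(1)}_r=m_r$ for all $r$. For $t=1,\dots,n$: set $x_t=\mathrm{TA}(q^{(t)}_1,\dots,q^{(t)}_k;\,T_t,T_{t+1},\dots,T_n)$ and $q^{(t+1)}_r=q^{(t)}_r-\mathbf{1}(x_t=r)$ for each $r$. Output $\mathbf{x}=(x_1,\dots,x_n)$. Subroutine $\mathrm{TA}(m_1,\dots,m_k;\,S_1,\dots,S_N)$ (ThresholdAllocation), with the convention $m_0:=0$: for $\gamma=k,k-1,\dots,1$: if $m_\gamma=m_{\gamma-1}$, go to the next $\gamma$; otherwise, for $h=\gamma,\gamma+1,\dots,k$: let $Z_L=\sum_{i=1}^{h-1}\min\{m_i,m_{\gamma-1}\}$ and $Z_H=\sum_{i=\gamma}^{h}(m_i-m_{\gamma-1})$; if $|\{i\in\{1,\dots,Z_L+Z_H\}: S_i>S_1\}|\ge Z_L$, return $\gamma$ (agent to which $S_1$ is assigned). *)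

theory Defs
  imports Complex_Main
begin

text \<open>The quotas are a function m (only m 1, ..., m k are used; m 0 is replaced by 0,
  the convention m_0 := 0). The signal list S is a list with S_i = S ! (i-1).
  If no gamma is returned (only possible when all quotas are 0), the result is 0.\<close>

definition TA_Z_L :: "(nat \<Rightarrow> nat) \<Rightarrow> nat \<Rightarrow> nat \<Rightarrow> nat" where
  "TA_Z_L mm \<gamma> h = (\<Sum>i\<in>{1..<h}. min (mm i) (mm (\<gamma> - 1)))"

definition TA_Z_H :: "(nat \<Rightarrow> nat) \<Rightarrow> nat \<Rightarrow> nat \<Rightarrow> nat" where
  "TA_Z_H mm \<gamma> h = (\<Sum>i\<in>{\<gamma>..h}. mm i - mm (\<gamma> - 1))"

definition TA_count :: "real list \<Rightarrow> nat \<Rightarrow> nat" where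
  "TA_count S z = card {i. 1 \<le> i \<and> i \<le> z \<and> i \<le> length S \<and> S ! (i - 1) > S ! 0}"

definition TA_test :: "nat \<Rightarrow> (nat \<Rightarrow> nat) \<Rightarrow> real list \<Rightarrow> nat \<Rightarrow> bool" where
  "TA_test k mm S \<gamma> =
     (mm \<gamma> \<noteq> mm (\<gamma> - 1) \<and>
      (\<exists>h\<in>{\<gamma>..k}. TA_count S (TA_Z_L mm \<gamma> h + TA_Z_H mm \<gamma> h) \<ge> TA_Z_L mm \<gamma> h))"

definition TA :: "nat \<Rightarrow> (nat \<Rightarrow> nat) \<Rightarrow> real list \<Rightarrow> nat" where
  "TA k m S =
     (let mm = (\<lambda>i. if i = 0 then 0 else m i);
          cands = filter (TA_test k mm S) (rev [1..<Suc k])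
      in if cands = [] then 0 else hd cands)"

text \<open>Algorithm 1. alg_q k m n T s is the quota vector q^(s+1) (so alg_q ... 0 = m = q^(1)),
  and alg_x k m n T t is the decision x_t for 1 \<le> t \<le> n, computed as
  TA(q^(t); T_t, ..., T_n). The sequence T is indexed T 1, ..., T n.\<close>

fun alg_q :: "nat \<Rightarrow> (nat \<Rightarrow> nat) \<Rightarrow> nat \<Rightarrow> (nat \<Rightarrow> real) \<Rightarrow> nat \<Rightarrow> (nat \<Rightarrow> nat)" where
  "alg_q k m n T 0 = m"
| "alg_q k m n T (Suc s) =
     (let q = alg_q k m n T s;
          x = TA k q (map T [Suc s..<Suc n])
      in (\<lambda>r. q r - (if x = r then 1 else 0)))"

definition alg_x :: "nat \<Rightarrow> (nat \<Rightarrow> nat) \<Rightarrow> nat \<Rightarrow> (nat \<Rightarrow> real) \<Rightarrow> nat \<Rightarrow> nat" where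
  "alg_x k m n T t = TA k (alg_q k m n T (t - 1)) (map T [t..<Suc n])"

end

theory Submission
  imports Defs
begin

(* Throughout, a quota vector q is read through pad0 q (entry 0 forced to 0, as TA does),
   and the algorithm keeps this padded vector sorted while the total quota drops by one
   per step.  TA returns the largest agent gamma passing its threshold test.

   Nothing exceeds L, so a passing agent x must have Z_L = 0, which forces all
   agents below x to have exhausted their quotas.  Quotas only decrease, so a later
   decision (made for an agent with positive quota) cannot lie below x.

   After an H-signal has been assigned to g, the invariant still_passes says
   that g would still pass its threshold test against the remaining signals.  It survives
   every step that processes an L-signal, and at the next H-signal it forces TA to return
   an agent >= g (an agent of [g..h] passes the real test, possibly after skipping levels
   of equal quota).  Chaining consecutive H-positions gives the claim. *)

section \<open>Padded and sorted quota vectors\<close>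

definition pad0 :: "(nat \<Rightarrow> nat) \<Rightarrow> nat \<Rightarrow> nat" where
  "pad0 q = (\<lambda>i. if i = 0 then 0 else q i)"

definition sorted_upto :: "nat \<Rightarrow> (nat \<Rightarrow> nat) \<Rightarrow> bool" where
  "sorted_upto k mm = (\<forall>r<k. mm r \<le> mm (Suc r))"

definition remove_unit :: "nat \<Rightarrow> (nat \<Rightarrow> nat) \<Rightarrow> nat \<Rightarrow> nat" where
  "remove_unit g mm = (\<lambda>i. mm i - (if i = g then 1 else 0))"

lemma remove_unit_apply [simp]: "remove_unit g mm i = mm i - (if i = g then 1 else 0)"
  by (simp add: remove_unit_def)

lemma pad0_remove_unit: "x \<noteq> 0 \<Longrightarrow> pad0 (remove_unit x q) = remove_unit x (pad0 q)"
  by (auto simp: pad0_def)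

lemma sorted_upto_mono:
  "sorted_upto k mm \<Longrightarrow> i \<le> j \<Longrightarrow> j \<le> k \<Longrightarrow> mm i \<le> mm j"
proof (induction j)
  case (Suc j)
  show ?case
  proof (cases "i = Suc j")
    case False
    then have "mm i \<le> mm j" using Suc by simp
    also have "mm j \<le> mm (Suc j)" using Suc.prems unfolding sorted_upto_def by simp
    finally show ?thesis .
  qed simp
qed simp

lemma sorted_upto_remove_unit:
  assumes "sorted_upto k mm" "1 \<le> g" "mm (g - 1) < mm g"
  shows "sorted_upto k (remove_unit g mm)"
  unfolding sorted_upto_def
proof (intro allI impI)
  fix r assume "r < k"
  then have le: "mm r \<le> mm (Suc r)" using assms(1) unfolding sorted_upto_def by simp
  show "remove_unit g mm r \<le> remove_unit g mm (Suc r)"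
  proof (cases "Suc r = g")
    case True
    then have "r = g - 1" by simp
    then show ?thesis using assms True by auto
  qed (use le in auto)
qed

lemma sum_remove_unit:
  assumes "finite A" "g \<in> A" "1 \<le> f g"
  shows "(\<Sum>i\<in>A. remove_unit g f i) = sum f A - 1"
proof -
  have "(\<Sum>i\<in>A. remove_unit g f i) = (f g - 1) + (\<Sum>i\<in>A - {g}. remove_unit g f i)"
    using assms by (simp add: sum.remove)
  also have "(\<Sum>i\<in>A - {g}. remove_unit g f i) = (\<Sum>i\<in>A - {g}. f i)"
    by (rule sum.cong) auto
  moreover have "sum f A = f g + (\<Sum>i\<in>A - {g}. f i)" using assms by (simp add: sum.remove)
  ultimately show ?thesis using assms by simp
qed

lemma sum_remove_unit_outside: "g \<notin> A \<Longrightarrow> (\<Sum>i\<in>A. remove_unit g f i) = sum f A"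
  by (rule sum.cong) auto

section \<open>Counting signals above a threshold\<close>

definition count_above :: "real \<Rightarrow> real list \<Rightarrow> nat \<Rightarrow> nat" where
  "count_above p R z = length (filter (\<lambda>x. p < x) (take z R))"

lemma TA_count_eq_count_above: "TA_count S z = count_above (S ! 0) S z"
proof -
  have "{i. 1 \<le> i \<and> i \<le> z \<and> i \<le> length S \<and> S ! (i - 1) > S ! 0}
        = Suc ` {i. i < min z (length S) \<and> S ! 0 < S ! i}"
  proof (intro set_eqI iffI)
    fix i assume "i \<in> {i. 1 \<le> i \<and> i \<le> z \<and> i \<le> length S \<and> S ! (i - 1) > S ! 0}"
    then show "i \<in> Suc ` {i. i < min z (length S) \<and> S ! 0 < S ! i}"
      by (auto simp: image_iff intro!: exI[of _ "i - 1"])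
  qed auto
  then have "TA_count S z = card {i. i < min z (length S) \<and> S ! 0 < S ! i}"
    unfolding TA_count_def by (simp add: card_image)
  also have "\<dots> = count_above (S ! 0) S z"
    unfolding count_above_def length_filter_conv_card by (rule arg_cong[where f = card]) auto
  finally show ?thesis .
qed

lemma count_above_Cons:
  "1 \<le> z \<Longrightarrow> count_above p (x # R) z = (if p < x then 1 else 0) + count_above p R (z - 1)"
  by (cases z) (auto simp: count_above_def)

lemma count_above_mono: "z \<le> z' \<Longrightarrow> count_above p R z \<le> count_above p R z'"
proof -
  assume "z \<le> z'"
  then have "take z' R = take z R @ take (z' - z) (drop z R)"
    by (metis le_add_diff_inverse take_add)
  then show ?thesis unfolding count_above_def by simp
qed

text \<open>The first signal never exceeds itself.\<close>
lemma TA_count_le: "1 \<le> z \<Longrightarrow> TA_count S z \<le> z - 1"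
proof (cases S)
  case Nil then show ?thesis by (simp add: TA_count_eq_count_above count_above_def)
next
  case (Cons y ys)
  assume "1 \<le> z"
  then have "TA_count S z = count_above y ys (z - 1)"
    using Cons by (simp add: TA_count_eq_count_above count_above_Cons)
  also have "\<dots> \<le> length (take (z - 1) ys)" unfolding count_above_def by (rule length_filter_le)
  also have "\<dots> \<le> z - 1" by simp
  finally show ?thesis .
qed

lemma TA_count_top: "\<forall>y\<in>set R. y \<le> L \<Longrightarrow> TA_count (L # R) z = 0"
proof -
  assume le: "\<forall>y\<in>set R. y \<le> L"
  have "filter (\<lambda>y. L < y) (take z' R) = []" for z'
    using le by (fastforce simp: filter_empty_conv dest: in_set_takeD)
  then show ?thesis by (cases z) (auto simp: TA_count_eq_count_above count_above_def)
qed

section \<open>The threshold quantities Z_L and Z_H on sorted quotas\<close>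

lemma Z_L_sorted:
  assumes "sorted_upto k mm" "1 \<le> g" "g \<le> h" "h \<le> k"
  shows "TA_Z_L mm g h = (\<Sum>i\<in>{1..<g}. mm i) + (h - g) * mm (g - 1)"
proof -
  let ?f = "\<lambda>i. min (mm i) (mm (g - 1))"
  have "TA_Z_L mm g h = sum ?f {1..<g} + sum ?f {g..<h}"
    unfolding TA_Z_L_def using sum.atLeastLessThan_concat[of 1 g h ?f] assms by simp
  also have "sum ?f {1..<g} = (\<Sum>i\<in>{1..<g}. mm i)"
    by (rule sum.cong) (use assms sorted_upto_mono[of k mm] in auto)
  also have "sum ?f {g..<h} = (\<Sum>i\<in>{g..<h}. mm (g - 1))"
    by (rule sum.cong) (use assms sorted_upto_mono[of k mm] in auto)
  finally show ?thesis by simp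
qed

lemma Z_L_plus_Z_H:
  assumes "sorted_upto k mm" "1 \<le> g" "g \<le> h" "h \<le> k"
  shows "TA_Z_L mm g h + TA_Z_H mm g h + mm (g - 1) = (\<Sum>i\<in>{1..h}. mm i)"
proof -
  have "TA_Z_H mm g h + (\<Sum>i\<in>{g..h}. mm (g - 1))
        = (\<Sum>i\<in>{g..h}. mm i - mm (g - 1) + mm (g - 1))"
    unfolding TA_Z_H_def sum.distrib by simp
  also have "\<dots> = (\<Sum>i\<in>{g..h}. mm i)"
    by (rule sum.cong) (use assms sorted_upto_mono[of k mm] in auto)
  finally have Z_H: "TA_Z_H mm g h + (Suc h - g) * mm (g - 1) = (\<Sum>i\<in>{g..h}. mm i)"
    by simp
  have split: "(\<Sum>i\<in>{1..h}. mm i) = (\<Sum>i\<in>{1..<g}. mm i) + (\<Sum>i\<in>{g..h}. mm i)"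
    using sum.atLeastLessThan_concat[of 1 g "Suc h" mm] assms
    by (simp add: atLeastLessThanSuc_atLeastAtMost)
  have "Suc h - g = (h - g) + 1" using assms by simp
  then show ?thesis using Z_H split Z_L_sorted[OF assms] by (simp add: algebra_simps)
qed

lemma level_le_lower_sum:
  fixes mm :: "nat \<Rightarrow> nat"
  shows "1 \<le> g - 1 \<Longrightarrow> mm (g - 1) \<le> (\<Sum>i\<in>{1..<g}. mm i)"
  by (rule member_le_sum) auto

section \<open>Characterising the output of TA\<close>

lemma TA_alt:
  "TA k q S = (let cands = filter (TA_test k (pad0 q) S) (rev [1..<Suc k])
               in if cands = [] then 0 else hd cands)"
  unfolding TA_def pad0_def by simp

lemma TA_ge_passing:
  assumes "1 \<le> g" "g \<le> k" "TA_test k (pad0 q) S g"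
  shows "g \<le> TA k q S"
proof -
  define cs where "cs = filter (TA_test k (pad0 q) S) (rev [1..<Suc k])"
  have decreasing: "sorted_wrt (>) cs" unfolding cs_def
    by (rule sorted_wrt_filter) (simp add: sorted_wrt_rev del: upt_Suc)
  have "g \<in> set cs" using assms unfolding cs_def by (simp del: upt_Suc)
  then obtain y ys where cs: "cs = y # ys" "g \<le> y"
    using decreasing by (cases cs) auto
  then show ?thesis unfolding TA_alt cs_def[symmetric] Let_def by simp
qed

lemma TA_nonzero_passes:
  assumes "TA k q S \<noteq> 0"
  shows "1 \<le> TA k q S \<and> TA k q S \<le> k \<and> TA_test k (pad0 q) S (TA k q S)"
proof -
  define cs where "cs = filter (TA_test k (pad0 q) S) (rev [1..<Suc k])"
  have ne: "cs \<noteq> []" and eq: "TA k q S = hd cs"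
    using assms unfolding TA_alt cs_def[symmetric] Let_def by (auto split: if_splits)
  then have "hd cs \<in> set cs" by simp
  then show ?thesis unfolding eq cs_def by (simp del: upt_Suc)
qed

text \<open>If some agent has positive quota, TA assigns the signal: the lowest agent with positive
  quota passes with h = gamma, since then Z_L = 0.\<close>
lemma TA_nonzero:
  assumes "1 \<le> r" "r \<le> k" "q r > 0"
  shows "TA k q S \<noteq> 0"
proof -
  define g where "g = (LEAST i. pad0 q i > 0)"
  have ex: "pad0 q r > 0" using assms by (simp add: pad0_def)
  have pos: "pad0 q g > 0" unfolding g_def by (rule LeastI[of _ r], rule ex)
  have "g \<le> r" unfolding g_def by (rule Least_le, rule ex)
  have "1 \<le> g" using pos by (cases g) (auto simp: pad0_def)
  have "\<not> pad0 q (g - 1) > 0" unfolding g_def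
    by (rule not_less_Least) (use \<open>1 \<le> g\<close> g_def in auto)
  then have below: "pad0 q (g - 1) = 0" by simp
  then have "TA_Z_L (pad0 q) g g = 0" unfolding TA_Z_L_def by simp
  then have "TA_test k (pad0 q) S g"
    unfolding TA_test_def using pos below \<open>1 \<le> g\<close> \<open>g \<le> r\<close> assms by (auto intro!: bexI[of _ g])
  then have "g \<le> TA k q S"
    using TA_ge_passing[of g k q S] \<open>1 \<le> g\<close> \<open>g \<le> r\<close> assms(2) by simp
  then show ?thesis using \<open>1 \<le> g\<close> by simp
qed

lemma TA_with_quota:
  fixes S :: "real list"
  assumes sorted: "sorted_upto k (pad0 q)" and total: "(\<Sum>r\<in>{1..k}. q r) > 0"
  defines "x \<equiv> TA k q S"
  shows "1 \<le> x \<and> x \<le> k \<and> TA_test k (pad0 q) S x \<and> pad0 q (x - 1) < pad0 q x"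
proof -
  have "\<exists>r\<in>{1..k}. q r > 0"
  proof (rule ccontr)
    assume "\<not> (\<exists>r\<in>{1..k}. q r > 0)"
    then have "(\<Sum>r\<in>{1..k}. q r) = 0" by simp
    then show False using total by simp
  qed
  then obtain r where "r \<in> {1..k}" "q r > 0" by blast
  then have "x \<noteq> 0" using TA_nonzero[of r k q S] unfolding x_def by auto
  then have x: "1 \<le> x" "x \<le> k" "TA_test k (pad0 q) S x"
    using TA_nonzero_passes unfolding x_def by blast+
  have "pad0 q (x - 1) \<le> pad0 q x" using sorted_upto_mono[OF sorted] x by simp
  moreover have "pad0 q x \<noteq> pad0 q (x - 1)" using x(3) unfolding TA_test_def by simp
  ultimately show ?thesis using x by simp
qed

text \<open>Levels of equal quota are skipped
  without changing Z_L or Z_H; at gamma = h a level of equal quota would contradict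
  TA_count_le.\<close>
lemma climb_to_passing:
  assumes "1 \<le> g" "g \<le> h" "h \<le> k" "mm 0 = 0" "mm (g - 1) > 0"
    and "TA_Z_L mm g h \<le> TA_count S (TA_Z_L mm g h + TA_Z_H mm g h)"
  shows "\<exists>g'\<in>{g..h}. TA_test k mm S g'"
  using assms
proof (induction "h - g" arbitrary: g)
  case 0
  then have gh: "g = h" by simp
  show ?case
  proof (cases "mm g = mm (g - 1)")
    case False
    then show ?thesis using 0 gh unfolding TA_test_def
      by (intro bexI[of _ g]) (auto intro!: bexI[of _ h])
  next
    case True
    have "2 \<le> g" using 0 by (cases "g = 1") auto
    then have level: "mm (g - 1) \<le> TA_Z_L mm g g" unfolding TA_Z_L_def
      using member_le_sum[of "g - 1" "{1..<g}" "\<lambda>i. min (mm i) (mm (g - 1))"] by simp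
    have "TA_Z_H mm g g = 0" unfolding TA_Z_H_def using True by simp
    then have "TA_Z_L mm g g \<le> TA_count S (TA_Z_L mm g g)" using 0 gh by simp
    moreover have "TA_count S (TA_Z_L mm g g) \<le> TA_Z_L mm g g - 1"
      by (rule TA_count_le) (use level 0 in auto)
    ultimately show ?thesis using level 0 by auto
  qed
next
  case (Suc d)
  show ?case
  proof (cases "mm g = mm (g - 1)")
    case False
    then show ?thesis using Suc.prems unfolding TA_test_def
      by (intro bexI[of _ g]) (auto intro!: bexI[of _ h])
  next
    case True
    have "g < h" using Suc by simp
    have Z_L: "TA_Z_L mm (Suc g) h = TA_Z_L mm g h" unfolding TA_Z_L_def using True by simp
    have "TA_Z_H mm g h = (mm g - mm (g - 1)) + (\<Sum>i\<in>{Suc g..h}. mm i - mm (g - 1))"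
      unfolding TA_Z_H_def using \<open>g < h\<close> by (simp add: sum.atLeast_Suc_atMost)
    then have Z_H: "TA_Z_H mm (Suc g) h = TA_Z_H mm g h" unfolding TA_Z_H_def using True by simp
    have "\<exists>g'\<in>{Suc g..h}. TA_test k mm S g'"
      by (rule Suc.hyps(1)) (use Suc.hyps(2) Suc.prems \<open>g < h\<close> True Z_L Z_H in auto)
    then show ?thesis by auto
  qed
qed

section \<open>One step of the algorithm\<close>

text \<open>The invariant behind H-monotonicity: agent g would still pass its threshold test
  against the remaining signals R, counting only signals above H.\<close>
definition still_passes :: "nat \<Rightarrow> real \<Rightarrow> nat \<Rightarrow> (nat \<Rightarrow> nat) \<Rightarrow> real list \<Rightarrow> bool" where
  "still_passes k H g mm R = (mm (g - 1) = 0 \<or>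
     (\<exists>h\<in>{g..k}. TA_Z_L mm g h \<le> count_above H R (TA_Z_L mm g h + TA_Z_H mm g h)))"

text \<open>Assigning an H-signal to g establishes the invariant: the signal itself did not count,
  and both sides of the test keep their values up to the removed unit.\<close>
lemma still_passes_after_H:
  assumes sorted: "sorted_upto k mm" and "mm 0 = 0" and g: "1 \<le> g" "g \<le> h" "h \<le> k"
    and step: "mm (g - 1) < mm g"
    and pass: "TA_Z_L mm g h \<le> TA_count (H # R) (TA_Z_L mm g h + TA_Z_H mm g h)"
  shows "still_passes k H g (remove_unit g mm) R"
proof -
  define mm' where "mm' = remove_unit g mm"
  define c where "c = mm (g - 1)"
  have c': "mm' (g - 1) = c" unfolding mm'_def c_def using g(1) by auto
  show ?thesis
  proof (cases "c = 0")
    case True then show ?thesis unfolding still_passes_def mm'_def[symmetric] using c' by simp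
  next
    case False
    have "1 \<le> g - 1" using False \<open>mm 0 = 0\<close> g unfolding c_def by (cases "g = 1") auto
    have sorted': "sorted_upto k mm'"
      unfolding mm'_def by (rule sorted_upto_remove_unit[OF sorted g(1) step])
    have lower: "(\<Sum>i\<in>{1..<g}. mm' i) = (\<Sum>i\<in>{1..<g}. mm i)"
      unfolding mm'_def by (rule sum_remove_unit_outside) auto
    have total: "(\<Sum>i\<in>{1..h}. mm' i) = (\<Sum>i\<in>{1..h}. mm i) - 1"
      unfolding mm'_def by (rule sum_remove_unit) (use g step in auto)
    have Z_L: "TA_Z_L mm' g h = TA_Z_L mm g h"
      using Z_L_sorted[OF sorted g] Z_L_sorted[OF sorted' g] lower c' c_def by simp
    have "c \<le> TA_Z_L mm g h"
      using Z_L_sorted[OF sorted g] level_le_lower_sum[OF \<open>1 \<le> g - 1\<close>, of mm] c_def by simp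
    then have pos: "1 \<le> TA_Z_L mm g h + TA_Z_H mm g h" using False by simp
    have "TA_Z_L mm g h + TA_Z_H mm g h + c = (\<Sum>i\<in>{1..h}. mm i)"
      using Z_L_plus_Z_H[OF sorted g] c_def by simp
    moreover have "TA_Z_L mm' g h + TA_Z_H mm' g h + c = (\<Sum>i\<in>{1..h}. mm' i)"
      using Z_L_plus_Z_H[OF sorted' g] c' by simp
    ultimately have Z: "TA_Z_L mm' g h + TA_Z_H mm' g h = TA_Z_L mm g h + TA_Z_H mm g h - 1"
      using total pos by simp
    have "TA_count (H # R) (TA_Z_L mm g h + TA_Z_H mm g h)
          = count_above H R (TA_Z_L mm g h + TA_Z_H mm g h - 1)"
      using pos by (simp add: TA_count_eq_count_above count_above_Cons)
    then have "TA_Z_L mm' g h \<le> count_above H R (TA_Z_L mm' g h + TA_Z_H mm' g h)"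
      using pass Z_L Z by simp
    then show ?thesis unfolding still_passes_def mm'_def[symmetric] using g by auto
  qed
qed

text \<open>The signal was assigned to an agent
  p below which all quotas are exhausted; if g's level is still positive, p lies below g,
  so Z_L drops by one while the lost L-signal costs at most one on the count side.\<close>
lemma still_passes_after_L:
  assumes sorted: "sorted_upto k mm" and sorted': "sorted_upto k (remove_unit p mm)"
    and "mm 0 = 0" and "H < L"
    and p: "1 \<le> p" "1 \<le> mm p" and empty_below: "\<And>i. 1 \<le> i \<Longrightarrow> i < p \<Longrightarrow> mm i = 0"
    and g: "1 \<le> g" and inv: "still_passes k H g mm (L # R)"
  shows "still_passes k H g (remove_unit p mm) R"
proof -
  define mm' where "mm' = remove_unit p mm"
  define c where "c = mm (g - 1)"
  have "mm' (g - 1) \<le> c" unfolding mm'_def c_def by simp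
  show ?thesis
  proof (cases "c = 0 \<or> mm' (g - 1) = 0")
    case True then show ?thesis unfolding still_passes_def mm'_def[symmetric] using \<open>mm' (g - 1) \<le> c\<close> by auto
  next
    case False
    then have "c > 0" by auto
    have "1 \<le> g - 1" using \<open>c > 0\<close> \<open>mm 0 = 0\<close> g unfolding c_def by (cases "g = 1") auto
    have "p \<le> g - 1" using empty_below[of "g - 1"] \<open>1 \<le> g - 1\<close> \<open>c > 0\<close> unfolding c_def by force
    obtain h where h: "g \<le> h" "h \<le> k"
      and pass: "TA_Z_L mm g h \<le> count_above H (L # R) (TA_Z_L mm g h + TA_Z_H mm g h)"
      using inv \<open>c > 0\<close> unfolding still_passes_def c_def by auto
    have sorted'': "sorted_upto k mm'" using sorted' unfolding mm'_def .
    have lower: "(\<Sum>i\<in>{1..<g}. mm' i) = (\<Sum>i\<in>{1..<g}. mm i) - 1"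
      unfolding mm'_def by (rule sum_remove_unit) (use p \<open>p \<le> g - 1\<close> in auto)
    have total: "(\<Sum>i\<in>{1..h}. mm' i) = (\<Sum>i\<in>{1..h}. mm i) - 1"
      unfolding mm'_def by (rule sum_remove_unit) (use p \<open>p \<le> g - 1\<close> h in auto)
    have level: "c \<le> (\<Sum>i\<in>{1..<g}. mm i)"
      using level_le_lower_sum[OF \<open>1 \<le> g - 1\<close>, of mm] c_def by simp
    have Z_L: "TA_Z_L mm g h = (\<Sum>i\<in>{1..<g}. mm i) + (h - g) * c"
      using Z_L_sorted[OF sorted g h] c_def by simp
    have Z_L': "TA_Z_L mm' g h = (\<Sum>i\<in>{1..<g}. mm i) - 1 + (h - g) * mm' (g - 1)"
      using Z_L_sorted[OF sorted'' g h] lower by simp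
    have "(h - g) * mm' (g - 1) \<le> (h - g) * c" using \<open>mm' (g - 1) \<le> c\<close> by simp
    then have Z_L_drop: "TA_Z_L mm' g h + 1 \<le> TA_Z_L mm g h"
      using Z_L Z_L' level \<open>c > 0\<close> by linarith
    have pos: "1 \<le> TA_Z_L mm g h + TA_Z_H mm g h" using Z_L level \<open>c > 0\<close> by simp
    have Z: "TA_Z_L mm g h + TA_Z_H mm g h - 1 \<le> TA_Z_L mm' g h + TA_Z_H mm' g h"
      using Z_L_plus_Z_H[OF sorted g h] Z_L_plus_Z_H[OF sorted'' g h] total pos
        \<open>mm' (g - 1) \<le> c\<close> c_def by linarith
    have "count_above H (L # R) (TA_Z_L mm g h + TA_Z_H mm g h)
          = 1 + count_above H R (TA_Z_L mm g h + TA_Z_H mm g h - 1)"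
      using pos \<open>H < L\<close> by (simp add: count_above_Cons)
    also have "\<dots> \<le> 1 + count_above H R (TA_Z_L mm' g h + TA_Z_H mm' g h)"
      using count_above_mono[OF Z] by simp
    finally have "TA_Z_L mm' g h \<le> count_above H R (TA_Z_L mm' g h + TA_Z_H mm' g h)"
      using pass Z_L_drop by simp
    then show ?thesis unfolding still_passes_def mm'_def[symmetric] using h by auto
  qed
qed

lemma TA_ge_still_passes:
  assumes sorted: "sorted_upto k (pad0 q)" and g: "1 \<le> g" "g \<le> k"
    and inv: "still_passes k H g (pad0 q) (H # R)" and nz: "TA k q (H # R) \<noteq> 0"
  shows "g \<le> TA k q (H # R)"
proof -
  define x where "x = TA k q (H # R)"
  have x: "1 \<le> x" "x \<le> k" "TA_test k (pad0 q) (H # R) x"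
    using TA_nonzero_passes[OF nz] x_def by auto
  have step: "pad0 q x \<noteq> pad0 q (x - 1)" using x(3) unfolding TA_test_def by simp
  show ?thesis
  proof (cases "pad0 q (g - 1) = 0")
    case True
    show ?thesis
    proof (rule ccontr)
      assume "\<not> g \<le> TA k q (H # R)"
      then have "x \<le> g - 1" unfolding x_def by simp
      then have "pad0 q x \<le> 0" "pad0 q (x - 1) \<le> pad0 q x"
        using sorted_upto_mono[OF sorted, of x "g - 1"] sorted_upto_mono[OF sorted, of "x - 1" x]
          True g by auto
      then show False using step by simp
    qed
  next
    case False
    then obtain h where h: "h \<in> {g..k}"
      and pass: "TA_Z_L (pad0 q) g h
                   \<le> count_above H (H # R) (TA_Z_L (pad0 q) g h + TA_Z_H (pad0 q) g h)"
      using inv unfolding still_passes_def by auto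
    have "\<exists>g'\<in>{g..h}. TA_test k (pad0 q) (H # R) g'"
      by (rule climb_to_passing)
        (use h g False pass in \<open>auto simp: TA_count_eq_count_above pad0_def\<close>)
    then obtain g' where "g' \<in> {g..h}" "TA_test k (pad0 q) (H # R) g'" by blast
    then show ?thesis using TA_ge_passing[of g' k q "H # R"] g h by auto
  qed
qed

lemma TA_L_exhausted_below:
  assumes sorted: "sorted_upto k (pad0 q)" and le: "\<forall>y\<in>set R. y \<le> L"
    and nz: "TA k q (L # R) \<noteq> 0" and i: "1 \<le> i" "i < TA k q (L # R)"
  shows "q i = 0"
proof -
  define x where "x = TA k q (L # R)"
  have x: "1 \<le> x" "x \<le> k" "TA_test k (pad0 q) (L # R) x"
    using TA_nonzero_passes[OF nz] x_def by auto
  then obtain h where h: "h \<in> {x..k}"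
    and pass: "TA_Z_L (pad0 q) x h \<le> TA_count (L # R) (TA_Z_L (pad0 q) x h + TA_Z_H (pad0 q) x h)"
    unfolding TA_test_def by auto
  then have Z_L: "TA_Z_L (pad0 q) x h = 0" using TA_count_top[OF le] by simp
  have "2 \<le> x" using i x_def by simp
  have "min (pad0 q (x - 1)) (pad0 q (x - 1)) \<le> TA_Z_L (pad0 q) x h" unfolding TA_Z_L_def
    by (rule member_le_sum) (use \<open>2 \<le> x\<close> h in auto)
  then have "pad0 q (x - 1) = 0" using Z_L by simp
  then have "pad0 q i = 0" using sorted_upto_mono[OF sorted, of i "x - 1"] i x x_def by simp
  then show ?thesis using i by (simp add: pad0_def)
qed

section \<open>Running the algorithm\<close>

context
  fixes k n :: nat and m :: "nat \<Rightarrow> nat" and T :: "nat \<Rightarrow> real" and H L :: real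
  assumes sorted: "\<And>r. 1 \<le> r \<Longrightarrow> r < k \<Longrightarrow> m r \<le> m (Suc r)"
    and n_def: "n = (\<Sum>r\<in>{1..k}. m r)"
    and HL: "H < L"
    and T_vals: "\<And>t. 1 \<le> t \<Longrightarrow> t \<le> n \<Longrightarrow> T t = H \<or> T t = L"
begin

abbreviation quota :: "nat \<Rightarrow> nat \<Rightarrow> nat" where "quota \<equiv> alg_q k m n T"
abbreviation rest :: "nat \<Rightarrow> real list" where "rest s \<equiv> map T [Suc s..<Suc n]"
abbreviation decision :: "nat \<Rightarrow> nat" where "decision \<equiv> alg_x k m n T"

lemma decision_Suc: "decision (Suc s) = TA k (quota s) (rest s)"
  by (simp add: alg_x_def)

lemma quota_Suc: "quota (Suc s) = remove_unit (decision (Suc s)) (quota s)"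
  by (auto simp: alg_x_def Let_def remove_unit_def)

lemma rest_Cons: "s < n \<Longrightarrow> rest s = T (Suc s) # rest (Suc s)"
  by (subst upt_conv_Cons) auto

lemma rest_le_L: "\<forall>y\<in>set (rest s). y \<le> L"
proof
  fix y assume "y \<in> set (rest s)"
  then obtain t where "Suc s \<le> t" "t \<le> n" "y = T t" by (auto simp del: upt_Suc)
  then show "y \<le> L" using T_vals[of t] HL by auto
qed

lemma quota_invariant:
  "s \<le> n \<Longrightarrow> sorted_upto k (pad0 (quota s)) \<and> (\<Sum>r\<in>{1..k}. quota s r) = n - s"
proof (induction s)
  case 0
  have "sorted_upto k (pad0 m)" unfolding sorted_upto_def pad0_def using sorted by auto
  then show ?case using n_def by simp
next
  case (Suc s)
  then have sorted_s: "sorted_upto k (pad0 (quota s))"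
    and total: "(\<Sum>r\<in>{1..k}. quota s r) = n - s" by auto
  define x where "x = decision (Suc s)"
  have x: "1 \<le> x" "x \<le> k" "pad0 (quota s) (x - 1) < pad0 (quota s) x"
    using TA_with_quota[OF sorted_s, of "rest s"] total Suc.prems
    unfolding x_def decision_Suc by auto
  have "x \<noteq> 0" using x(1) by simp
  have "sorted_upto k (pad0 (quota (Suc s)))"
    unfolding quota_Suc x_def[symmetric] pad0_remove_unit[OF \<open>x \<noteq> 0\<close>]
    by (rule sorted_upto_remove_unit) (use sorted_s x in auto)
  moreover have "(\<Sum>r\<in>{1..k}. quota (Suc s) r) = (\<Sum>r\<in>{1..k}. quota s r) - 1"
    unfolding quota_Suc x_def[symmetric]
    by (rule sum_remove_unit) (use x in \<open>auto simp: pad0_def split: if_splits\<close>)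
  ultimately show ?case using total by simp
qed

lemma decision_props:
  assumes "s < n"
  defines "x \<equiv> decision (Suc s)"
  shows "1 \<le> x \<and> x \<le> k \<and> TA_test k (pad0 (quota s)) (rest s) x
     \<and> pad0 (quota s) (x - 1) < pad0 (quota s) x
     \<and> pad0 (quota (Suc s)) = remove_unit x (pad0 (quota s))
     \<and> sorted_upto k (pad0 (quota s)) \<and> sorted_upto k (pad0 (quota (Suc s)))"
proof -
  have inv: "sorted_upto k (pad0 (quota s))" "(\<Sum>r\<in>{1..k}. quota s r) = n - s"
    using quota_invariant[of s] assms by auto
  have inv': "sorted_upto k (pad0 (quota (Suc s)))" using quota_invariant[of "Suc s"] assms by auto
  have x: "1 \<le> x \<and> x \<le> k \<and> TA_test k (pad0 (quota s)) (rest s) x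
     \<and> pad0 (quota s) (x - 1) < pad0 (quota s) x"
    using TA_with_quota[OF inv(1), of "rest s"] inv(2) assms unfolding x_def decision_Suc by simp
  then have "pad0 (quota (Suc s)) = remove_unit x (pad0 (quota s))"
    unfolding quota_Suc x_def[symmetric] by (simp add: pad0_remove_unit)
  then show ?thesis using x inv inv' by blast
qed

lemma quota_antimono: "s \<le> s' \<Longrightarrow> quota s' r \<le> quota s r"
proof (induction s' rule: dec_induct)
  case (step s')
  have "quota (Suc s') r \<le> quota s' r" unfolding quota_Suc by simp
  then show ?case using step by simp
qed simp

text \<open>Monotonicity on L-positions: the later decision has positive quota at time a, while
  all agents below decision a are exhausted at time a.\<close>
lemma L_monotone:
  assumes "1 \<le> a" "a < b" "b \<le> n" "T a = L" "T b = L"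
  shows "decision a \<le> decision b"
proof (rule ccontr)
  assume below: "\<not> decision a \<le> decision b"
  obtain s where a: "a = Suc s" using assms by (cases a) auto
  obtain s' where b: "b = Suc s'" using assms by (cases b) auto
  have "s < n" "s' < n" "s \<le> s'" using assms a b by auto
  note props_b = decision_props[OF \<open>s' < n\<close>]
  have "quota s' (decision b) > 0" using props_b b by (auto simp: pad0_def split: if_splits)
  then have pos: "quota s (decision b) > 0"
    using quota_antimono[OF \<open>s \<le> s'\<close>, of "decision b"] by simp
  note props_a = decision_props[OF \<open>s < n\<close>]
  have rest: "rest s = L # rest (Suc s)" using rest_Cons[OF \<open>s < n\<close>] assms a by simp
  have "quota s (decision b) = 0"
    by (rule TA_L_exhausted_below[of k "quota s" "rest (Suc s)" L])
      (use props_a props_b rest_le_L rest below a b in \<open>auto simp: decision_Suc\<close>)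
  then show False using pos by simp
qed

lemma still_passes_start:
  assumes "s < n" and "T (Suc s) = H"
  shows "still_passes k H (decision (Suc s)) (pad0 (quota (Suc s))) (rest (Suc s))"
proof -
  note props = decision_props[OF \<open>s < n\<close>]
  obtain h where h: "h \<in> {decision (Suc s)..k}" and
    pass: "TA_Z_L (pad0 (quota s)) (decision (Suc s)) h \<le> TA_count (rest s)
        (TA_Z_L (pad0 (quota s)) (decision (Suc s)) h + TA_Z_H (pad0 (quota s)) (decision (Suc s)) h)"
    using props unfolding TA_test_def by auto
  have "rest s = H # rest (Suc s)" using rest_Cons[OF \<open>s < n\<close>] assms by simp
  then show ?thesis
    using still_passes_after_H[of k "pad0 (quota s)" "decision (Suc s)" h H "rest (Suc s)"]
      props h pass by (auto simp: pad0_def)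
qed

lemma still_passes_step_L:
  assumes "s < n" and "T (Suc s) = L" and "1 \<le> g"
    and inv: "still_passes k H g (pad0 (quota s)) (rest s)"
  shows "still_passes k H g (pad0 (quota (Suc s))) (rest (Suc s))"
proof -
  note props = decision_props[OF \<open>s < n\<close>]
  have rest: "rest s = L # rest (Suc s)" using rest_Cons[OF \<open>s < n\<close>] assms by simp
  have exhausted: "pad0 (quota s) i = 0" if "1 \<le> i" "i < decision (Suc s)" for i
    using TA_L_exhausted_below[of k "quota s" "rest (Suc s)" L i] props that rest rest_le_L
    by (auto simp: decision_Suc pad0_def)
  from props have x: "1 \<le> decision (Suc s)" "1 \<le> pad0 (quota s) (decision (Suc s))"
    and sorted_s: "sorted_upto k (pad0 (quota s))"
    and update: "pad0 (quota (Suc s)) = remove_unit (decision (Suc s)) (pad0 (quota s))"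
    by linarith+
  have sorted': "sorted_upto k (remove_unit (decision (Suc s)) (pad0 (quota s)))"
    using props unfolding update[symmetric] by blast
  have inv': "still_passes k H g (pad0 (quota s)) (L # rest (Suc s))" using inv rest by simp
  show ?thesis unfolding update
    by (rule still_passes_after_L[OF sorted_s sorted' _ HL x exhausted \<open>1 \<le> g\<close> inv'])
      (simp add: pad0_def)
qed

lemma H_consecutive:
  assumes "1 \<le> a" "a < b" "b \<le> n" "T a = H" "T b = H"
    and only_L: "\<And>u. a < u \<Longrightarrow> u < b \<Longrightarrow> T u = L"
  shows "decision a \<le> decision b"
proof -
  obtain s0 where a: "a = Suc s0" using assms by (cases a) auto
  define g where "g = decision a"
  have g: "1 \<le> g" "g \<le> k" using decision_props[of s0] assms a g_def by auto
  have inv: "still_passes k H g (pad0 (quota s)) (rest s)" if "a \<le> s" "s < b" for s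
    using that
  proof (induction s rule: dec_induct)
    case base
    then show ?case using still_passes_start[of s0] assms a g_def by auto
  next
    case (step s)
    then show ?case using still_passes_step_L[of s g] only_L assms g by auto
  qed
  obtain s where b: "b = Suc s" using assms by (cases b) auto
  have "s < n" "T (Suc s) = H" using assms b by auto
  note props = decision_props[OF \<open>s < n\<close>]
  have rest: "rest s = H # rest (Suc s)" using rest_Cons[OF \<open>s < n\<close>] \<open>T (Suc s) = H\<close> by simp
  have "g \<le> TA k (quota s) (H # rest (Suc s))"
    by (rule TA_ge_still_passes) (use props g inv[of s] assms b rest in \<open>auto simp: decision_Suc\<close>)
  then show ?thesis using rest b g_def by (simp add: decision_Suc)
qed

text \<open>Monotonicity on H-positions: pass through the last H-position before b.\<close>
lemma H_monotone:
  assumes "1 \<le> a" "a < b" "b \<le> n" "T a = H" "T b = H"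
  shows "decision a \<le> decision b"
  using assms
proof (induction b rule: less_induct)
  case (less b)
  define u where "u = Max {u. a \<le> u \<and> u < b \<and> T u = H}"
  have fin: "finite {u. a \<le> u \<and> u < b \<and> T u = H}" by simp
  have u: "a \<le> u" "u < b" "T u = H"
    using Max_in[OF fin] less.prems unfolding u_def[symmetric] by auto
  have only_L: "T v = L" if "u < v" "v < b" for v
  proof -
    have "T v \<noteq> H"
    proof
      assume "T v = H"
      then have "v \<in> {u. a \<le> u \<and> u < b \<and> T u = H}" using that u by auto
      then have "v \<le> u" unfolding u_def by (rule Max_ge[OF fin])
      then show False using that by simp
    qed
    then show ?thesis using T_vals[of v] that u less.prems by auto
  qed
  have "decision a \<le> decision u"
    using less.IH[of u] u less.prems by (cases "a = u") auto
  also have "decision u \<le> decision b"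
    by (rule H_consecutive) (use u less.prems only_L in auto)
  finally show ?case .
qed

end

theorem lemma5:
  fixes k n :: nat and m :: "nat \<Rightarrow> nat" and T :: "nat \<Rightarrow> real" and H L :: real
    and i j :: nat
  assumes sorted: "\<And>r. 1 \<le> r \<Longrightarrow> r < k \<Longrightarrow> m r \<le> m (Suc r)"
    and n_def: "n = (\<Sum>r\<in>{1..k}. m r)"
    and HL: "0 \<le> H" "H < L"
    and T_vals: "\<And>t. 1 \<le> t \<Longrightarrow> t \<le> n \<Longrightarrow> T t = H \<or> T t = L"
    and ij: "1 \<le> i" "i < j" "j \<le> n"
    and same: "T i = T j"
  shows "alg_x k m n T i \<le> alg_x k m n T j"
proof -
  have "T i = H \<or> T i = L" using T_vals ij by simp
  then show ?thesis
  proof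
    assume "T i = H"
    then show ?thesis using H_monotone[OF sorted n_def HL(2) T_vals] ij same by simp
  next
    assume "T i = L"
    then show ?thesis using L_monotone[OF sorted n_def HL(2) T_vals] ij same by simp
  qed
qed

end
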